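(* In the session calculus, weak fairness of components coincides with justness: a path (starting in a network state) is WC-fair if and only if it is just.
   Context: Session calculus. Fix sets of locations $p,q,r,\dots$, labels $\lambda$ and recursion variables $X,Y$. Threads: $P ::= \mathbf{end} \mid \bigoplus_{i\in I} p_i!\lambda_i;P_i \mid \sum_{i\in I} p_i?\lambda_i;P_i \mid X \mid \mu X.P$, with $I$ finite (nonempty for $\bigoplus$) and expressions $\mu X.X$, $\mu X.\mu Y.P$ excluded. Networks: $N ::= p[\![P]\!] \mid 0 \mid N\parallel N$; in a network all locations are distinct, all threads are closed, and every location named in a send or receive is a location of $N$. Thread states additionally allow the form $\langle q!\lambda\rangle;P$ (an output already selected); network states are built from located thread states likewise, taken modulo the structural congruence $\equiv$ (associativity, commutativity of $\parallel$, $N\parallel 0\equiv N$). The transition relation is the least relation closed under $\equiv$ containing: (choice) $p[\![\bigoplus_{i\in I}p_i!\lambda_i;P_i]\!]\parallel N \xrightarrow{\tau} p[\![\langle p_k!\lambda_k\rangle;P_k]\!]\parallel N$ for $k\in I$; (unfold) $p[\![\mu X.P]\!]\parallel N\xrightarrow{\tau} p[\![P\{\mu X.P/X\}]\!]\parallel N$; (comm) $p_k[\![\langle q!\lambda_k\rangle;Q]\!]\parallel q[\![\sum_{i\in I}p_i?\lambda_i;P_i]\!]\parallel N \xrightarrow{(p_k,\lambda_k,q)} p_k[\![Q]\!]\parallel q[\![P_k]\!]\parallel N$ for $k\in I$. For a transition $t$, $\mathrm{comp}(t)$ is the single location moving in a $\tau$-transition and $\{p,q\}$ for a label $(p,\lambda,q)$;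 $t$ involves $p$ if $p\in\mathrm{comp}(t)$; $t,u$ are concurrent if $\mathrm{comp}(t)\cap\mathrm{comp}(u)=\emptyset$. A path is a network state with a maximal (infinite or ending in a state without outgoing transitions) sequence of transitions. WC: location $p$ is enabled in a state if some transition from it involves $p$; perpetually enabled on a path if enabled in all its states. A path $\pi$ is WC-fair if for every suffix $\pi'$ and every location perpetually enabled on $\pi'$, $\pi'$ contains a transition involving that location. Justness: $\pi$ is just if for every suffix of $\pi$ starting in state $s$ and every transition $t$ enabled in $s$, that suffix contains a transition $u$ not concurrent with $t$. *)

theory Defs
  imports Main "HOL-Library.Extended_Nat"
begin

text \<open>Locations 'l, labels 'a, recursion variables 'x.
  Finite index sets I of choices are represented by lists of branches.
  The constructor Sel q lam P represents the thread state <q!lam>;P.\<close>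

datatype ('l, 'a, 'x) proc =
    End
  | Send "('l \<times> 'a \<times> ('l, 'a, 'x) proc) list"
  | Recv "('l \<times> 'a \<times> ('l, 'a, 'x) proc) list"
  | Var 'x
  | Mu 'x "('l, 'a, 'x) proc"
  | Sel 'l 'a "('l, 'a, 'x) proc"

fun is_thread :: "('l, 'a, 'x) proc \<Rightarrow> bool" where
  "is_thread End = True"
| "is_thread (Send bs) = (bs \<noteq> [] \<and> (\<forall>b\<in>set bs. is_thread (snd (snd b))))"
| "is_thread (Recv bs) = (\<forall>b\<in>set bs. is_thread (snd (snd b)))"
| "is_thread (Var x) = True"
| "is_thread (Mu x P) = (P \<noteq> Var x \<and> (\<forall>y Q. P \<noteq> Mu y Q) \<and> is_thread P)"
| "is_thread (Sel q l P) = False"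

fun fv :: "('l, 'a, 'x) proc \<Rightarrow> 'x set" where
  "fv End = {}"
| "fv (Send bs) = (\<Union>b\<in>set bs. fv (snd (snd b)))"
| "fv (Recv bs) = (\<Union>b\<in>set bs. fv (snd (snd b)))"
| "fv (Var x) = {x}"
| "fv (Mu x P) = fv P - {x}"
| "fv (Sel q l P) = fv P"

fun locs :: "('l, 'a, 'x) proc \<Rightarrow> 'l set" where
  "locs End = {}"
| "locs (Send bs) = (\<Union>b\<in>set bs. insert (fst b) (locs (snd (snd b))))"
| "locs (Recv bs) = (\<Union>b\<in>set bs. insert (fst b) (locs (snd (snd b))))"
| "locs (Var x) = {}"
| "locs (Mu x P) = locs P"
| "locs (Sel q l P) = insert q (locs P)"

text \<open>Substitution P{Q/X} (used only with closed Q, so no capture).\<close>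
fun subst :: "'x \<Rightarrow> ('l, 'a, 'x) proc \<Rightarrow> ('l, 'a, 'x) proc \<Rightarrow> ('l, 'a, 'x) proc" where
  "subst x Q End = End"
| "subst x Q (Send bs) = Send (map (\<lambda>(p, l, P). (p, l, subst x Q P)) bs)"
| "subst x Q (Recv bs) = Recv (map (\<lambda>(p, l, P). (p, l, subst x Q P)) bs)"
| "subst x Q (Var y) = (if x = y then Q else Var y)"
| "subst x Q (Mu y P) = (if x = y then Mu y P else Mu y (subst x Q P))"
| "subst x Q (Sel q l P) = Sel q l (subst x Q P)"

definition is_thread_state :: "('l, 'a, 'x) proc \<Rightarrow> bool" where
  "is_thread_state P \<longleftrightarrow> is_thread P \<or> (\<exists>q l P'. P = Sel q l P' \<and> is_thread P')"

text \<open>A network state modulo structural congruence is a finite partial map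
  from locations to thread states (locations are distinct, order and 0 irrelevant).\<close>
type_synonym ('l, 'a, 'x) net = "'l \<Rightarrow> ('l, 'a, 'x) proc option"

definition net_state :: "('l, 'a, 'x) net \<Rightarrow> bool" where
  "net_state N \<longleftrightarrow> finite (dom N) \<and>
     (\<forall>p P. N p = Some P \<longrightarrow> is_thread_state P \<and> fv P = {} \<and> locs P \<subseteq> dom N)"

text \<open>Transition labels; a tau-transition is annotated with the unique moving location.\<close>
datatype ('l, 'a) act = Tau 'l | Comm 'l 'a 'l

fun comp :: "('l, 'a) act \<Rightarrow> 'l set" where
  "comp (Tau p) = {p}"
| "comp (Comm p l q) = {p, q}"

inductive step :: "('l, 'a, 'x) net \<Rightarrow> ('l, 'a) act \<Rightarrow> ('l, 'a, 'x) net \<Rightarrow> bool" where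
  choice: "\<lbrakk> N p = Some (Send bs); k < length bs; bs ! k = (q, l, P) \<rbrakk>
           \<Longrightarrow> step N (Tau p) (N(p \<mapsto> Sel q l P))"
| unfold: "N p = Some (Mu x P) \<Longrightarrow> step N (Tau p) (N(p \<mapsto> subst x (Mu x P) P))"
| comm: "\<lbrakk> p \<noteq> q; N p = Some (Sel q l Q); N q = Some (Recv bs); k < length bs;
           bs ! k = (p, l, P) \<rbrakk>
         \<Longrightarrow> step N (Comm p l q) (N(p \<mapsto> Q, q \<mapsto> P))"

text \<open>A path from N: states sigma 0, sigma 1, ..., actions alpha 0, alpha 1, ...,
  with n the number of transitions (infinity for an infinite path). Values beyond n are irrelevant.\<close>
definition is_path :: "('l, 'a, 'x) net \<Rightarrow> (nat \<Rightarrow> ('l, 'a, 'x) net) \<Rightarrow> (nat \<Rightarrow> ('l, 'a) act) \<Rightarrow> enat \<Rightarrow> bool" where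
  "is_path N \<sigma> \<alpha> n \<longleftrightarrow> \<sigma> 0 = N
     \<and> (\<forall>i. enat i < n \<longrightarrow> step (\<sigma> i) (\<alpha> i) (\<sigma> (Suc i)))
     \<and> (\<forall>m. n = enat m \<longrightarrow> \<not> (\<exists>a N'. step (\<sigma> m) a N'))"

definition enabled :: "('l, 'a, 'x) net \<Rightarrow> 'l \<Rightarrow> bool" where
  "enabled N p \<longleftrightarrow> (\<exists>a N'. step N a N' \<and> p \<in> comp a)"

text \<open>Suffixes start at index k with enat k \<le> n; the suffix's states are sigma j for
  k \<le> j, enat j \<le> n, and its transitions are those with index k \<le> j, enat j < n.\<close>
definition wc_fair :: "(nat \<Rightarrow> ('l, 'a, 'x) net) \<Rightarrow> (nat \<Rightarrow> ('l, 'a) act) \<Rightarrow> enat \<Rightarrow> bool" where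
  "wc_fair \<sigma> \<alpha> n \<longleftrightarrow> (\<forall>k p. enat k \<le> n \<longrightarrow>
      (\<forall>j. k \<le> j \<longrightarrow> enat j \<le> n \<longrightarrow> enabled (\<sigma> j) p) \<longrightarrow>
      (\<exists>j. k \<le> j \<and> enat j < n \<and> p \<in> comp (\<alpha> j)))"

definition just :: "(nat \<Rightarrow> ('l, 'a, 'x) net) \<Rightarrow> (nat \<Rightarrow> ('l, 'a) act) \<Rightarrow> enat \<Rightarrow> bool" where
  "just \<sigma> \<alpha> n \<longleftrightarrow> (\<forall>k. enat k \<le> n \<longrightarrow> (\<forall>t N'. step (\<sigma> k) t N' \<longrightarrow>
      (\<exists>j. k \<le> j \<and> enat j < n \<and> comp (\<alpha> j) \<inter> comp t \<noteq> {})))"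

end

theory Submission
  imports Defs
begin

text \<open>Every transition acts only on its components, and whether it can fire depends only on
  them. Hence a transition that stays enabled forever keeps its components perpetually enabled,
  so WC-fairness implies justness. Conversely, let p be perpetually enabled but idle from some
  point on. If p can move on its own, justness moves p. If p is the receiver of an output already
  selected by some r, then r must move by justness, and the first move of r starts from that
  selected output, so it involves p. If p has itself selected an output to q, then q is a
  receiver at every later state, and justness makes q receive again and again; each reception
  strictly shrinks q's thread, which cannot go on forever.\<close>

lemma comp_nonempty: "comp a \<noteq> {}"
  by (cases a) auto

lemma step_frame: "step N a N' \<Longrightarrow> p \<notin> comp a \<Longrightarrow> N' p = N p"
  by (induct rule: step.induct) auto

lemma step_local: "step N t N' \<Longrightarrow> \<forall>x\<in>comp t. M x = N x \<Longrightarrow> \<exists>M'. step M t M'"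
  by (induct rule: step.induct) (auto intro: step.intros)

lemma step_involving_cases:
  "step N a N' \<Longrightarrow> p \<in> comp a \<Longrightarrow>
     comp a = {p} \<or> (\<exists>r l Q. comp a = {r, p} \<and> N r = Some (Sel p l Q))
       \<or> (\<exists>q l Q. N p = Some (Sel q l Q))"
  by (induct rule: step.induct) auto

lemma step_from_Sel:
  "step N a N' \<Longrightarrow> p \<in> comp a \<Longrightarrow> N p = Some (Sel q l Q) \<Longrightarrow>
     comp a = {p, q} \<and> (\<exists>bs. N q = Some (Recv bs))"
  by (induct rule: step.induct) auto

lemma size_Recv_branch: "(r, l, P) \<in> set bs \<Longrightarrow> size P < size (Recv bs)"
  by (induct bs) auto

lemma step_from_Recv_shrinks:
  "step N a N' \<Longrightarrow> q \<in> comp a \<Longrightarrow> N q = Some (Recv bs) \<Longrightarrow>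
     \<exists>P. N' q = Some P \<and> size P < size (Recv bs)"
proof (induct rule: step.induct)
  case (comm p q' N l Q bs' k P)
  then show ?case using size_Recv_branch[of p l P bs'] nth_mem[of k bs'] by auto
qed auto

lemma decreasing_infinitely_often_absurd:
  fixes f :: "nat \<Rightarrow> nat" and n :: enat
  assumes "enat k \<le> n"
    and mono: "\<And>i. k \<le> i \<Longrightarrow> enat i < n \<Longrightarrow> f (Suc i) \<le> f i"
    and drops: "\<And>j. k \<le> j \<Longrightarrow> enat j \<le> n \<Longrightarrow> \<exists>i\<ge>j. enat i < n \<and> f (Suc i) < f i"
  shows False
proof -
  have antimono: "f i \<le> f j" if "k \<le> j" "j \<le> i" "enat i \<le> n" for i j
    using that(2,3)
  proof (induction i rule: dec_induct)
    case (step i)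
    then have "enat i < n" by (simp add: Suc_ile_eq)
    then have "f i \<le> f j" using step.IH by (simp add: order_less_imp_le)
    then show ?case using \<open>enat i < n\<close> step.hyps(1) that(1) mono[of i] by simp
  qed simp
  have "\<exists>j\<ge>k. enat j \<le> n \<and> f j + m \<le> f k" for m
  proof (induct m)
    case (Suc m)
    then obtain j where j: "k \<le> j" "enat j \<le> n" "f j + m \<le> f k" by blast
    then obtain i where i: "j \<le> i" "enat i < n" "f (Suc i) < f i" using drops by blast
    have "f i \<le> f j" using antimono j i by (simp add: order_less_imp_le)
    moreover have "enat (Suc i) \<le> n" using i(2) by (simp add: Suc_ile_eq)
    ultimately show ?case using i j by (intro exI[of _ "Suc i"]) auto
  qed (use assms(1) in auto)
  then show False by (metis add_leE not_less_eq_eq)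
qed

locale transition_sequence =
  fixes \<sigma> :: "nat \<Rightarrow> ('l, 'a, 'x) net" and \<alpha> :: "nat \<Rightarrow> ('l, 'a) act" and n :: enat
  assumes step_at: "enat i < n \<Longrightarrow> step (\<sigma> i) (\<alpha> i) (\<sigma> (Suc i))"
begin

lemma state_unchanged:
  assumes "k \<le> j" "enat j \<le> n" "\<And>i. k \<le> i \<Longrightarrow> i < j \<Longrightarrow> p \<notin> comp (\<alpha> i)"
  shows "\<sigma> j p = \<sigma> k p"
  using assms
proof (induct j rule: dec_induct)
  case (step j)
  then have "enat j < n" by (simp add: Suc_ile_eq)
  then show ?case using step step_frame[OF step_at] by simp
qed simp

lemma first_move_from_state_at:
  assumes "k \<le> j" "enat j < n" "r \<in> comp (\<alpha> j)"
  obtains j0 where "k \<le> j0" "enat j0 < n" "r \<in> comp (\<alpha> j0)" "\<sigma> j0 r = \<sigma> k r"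
proof -
  define j0 where "j0 = (LEAST j. k \<le> j \<and> enat j < n \<and> r \<in> comp (\<alpha> j))"
  have j0: "k \<le> j0" "enat j0 < n" "r \<in> comp (\<alpha> j0)"
    using LeastI[of "\<lambda>j. k \<le> j \<and> enat j < n \<and> r \<in> comp (\<alpha> j)", OF conjI[OF assms(1) conjI[OF assms(2,3)]]]
    unfolding j0_def by auto
  have "r \<notin> comp (\<alpha> i)" if "k \<le> i" "i < j0" for i
    using not_less_Least[of i "\<lambda>j. k \<le> j \<and> enat j < n \<and> r \<in> comp (\<alpha> j)"] that j0(2)
    unfolding j0_def by (meson enat_ord_simps(2) order.strict_trans)
  then have "\<sigma> j0 r = \<sigma> k r" using state_unchanged j0 by (simp add: order_less_imp_le)
  with j0 show thesis by (rule that)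
qed

lemma enabled_while_untouched:
  assumes "step (\<sigma> k) t N'" "k \<le> j" "enat j \<le> n"
    and untouched: "\<And>i. k \<le> i \<Longrightarrow> enat i < n \<Longrightarrow> comp (\<alpha> i) \<inter> comp t = {}"
  shows "\<exists>M. step (\<sigma> j) t M"
proof -
  have "\<sigma> j x = \<sigma> k x" if "x \<in> comp t" for x
  proof (rule state_unchanged[OF assms(2,3)])
    fix i assume "k \<le> i" "i < j"
    then have "enat i < n" using assms(3) by (meson enat_ord_simps(2) order.strict_trans2)
    then show "x \<notin> comp (\<alpha> i)" using untouched \<open>k \<le> i\<close> that by blast
  qed
  then show ?thesis using step_local[OF assms(1)] by simp
qed

lemma wc_fair_imp_just:
  assumes "wc_fair \<sigma> \<alpha> n"
  shows "just \<sigma> \<alpha> n"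
  unfolding just_def
proof (intro allI impI, rule ccontr)
  fix k t N'
  assume k: "enat k \<le> n" and t: "step (\<sigma> k) t N'"
    and "\<not> (\<exists>j\<ge>k. enat j < n \<and> comp (\<alpha> j) \<inter> comp t \<noteq> {})"
  then have untouched: "\<And>i. k \<le> i \<Longrightarrow> enat i < n \<Longrightarrow> comp (\<alpha> i) \<inter> comp t = {}"
    by blast
  obtain p where p: "p \<in> comp t" using comp_nonempty[of t] by blast
  have "enabled (\<sigma> j) p" if "k \<le> j" "enat j \<le> n" for j
    using enabled_while_untouched[OF t that untouched] p unfolding enabled_def by blast
  then obtain j where "k \<le> j" "enat j < n" "p \<in> comp (\<alpha> j)"
    using assms k unfolding wc_fair_def by blast
  then show False using untouched p by blast
qed

lemma just_selected_sender_moves: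
  assumes just: "just \<sigma> \<alpha> n" and k: "enat k \<le> n"
    and enabled: "\<And>j. k \<le> j \<Longrightarrow> enat j \<le> n \<Longrightarrow> enabled (\<sigma> j) p"
    and idle: "\<And>j. k \<le> j \<Longrightarrow> enat j < n \<Longrightarrow> p \<notin> comp (\<alpha> j)"
    and sel: "\<sigma> k p = Some (Sel q l Q)"
  shows False
proof -
  have q_waits: "(\<exists>bs. \<sigma> j q = Some (Recv bs)) \<and> (\<exists>i\<ge>j. enat i < n \<and> q \<in> comp (\<alpha> i))"
    if j: "k \<le> j" "enat j \<le> n" for j
  proof -
    obtain b M where b: "step (\<sigma> j) b M" "p \<in> comp b"
      using enabled[OF j] unfolding enabled_def by blast
    have "\<sigma> j p = \<sigma> k p"
    proof (rule state_unchanged[OF j])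
      fix i assume "k \<le> i" "i < j"
      then show "p \<notin> comp (\<alpha> i)"
        using idle j(2) by (meson enat_ord_simps(2) order.strict_trans2)
    qed
    then have "\<sigma> j p = Some (Sel q l Q)" using sel by simp
    then have "comp b = {p, q}" "\<exists>bs. \<sigma> j q = Some (Recv bs)"
      using step_from_Sel[OF b] by auto
    moreover obtain i where "j \<le> i" "enat i < n" "comp (\<alpha> i) \<inter> comp b \<noteq> {}"
      using just j(2) b(1) unfolding just_def by blast
    ultimately show ?thesis using idle[of i] j(1) by auto
  qed
  define f where "f j = size (the (\<sigma> j q))" for j
  have f_step: "f (Suc i) \<le> f i \<and> (q \<in> comp (\<alpha> i) \<longrightarrow> f (Suc i) < f i)"
    if i: "k \<le> i" "enat i < n" for i
  proof (cases "q \<in> comp (\<alpha> i)")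
    case True
    obtain bs where "\<sigma> i q = Some (Recv bs)" using q_waits i by (meson order_less_imp_le)
    then show ?thesis
      using step_from_Recv_shrinks[OF step_at[OF i(2)] True] unfolding f_def by auto
  next
    case False
    then show ?thesis using step_frame[OF step_at[OF i(2)]] unfolding f_def by simp
  qed
  show False
  proof (rule decreasing_infinitely_often_absurd[OF k, of f])
    fix j assume "k \<le> j" "enat j \<le> n"
    then show "\<exists>i\<ge>j. enat i < n \<and> f (Suc i) < f i"
      using q_waits f_step by (meson order_trans)
  qed (use f_step in blast)
qed

lemma just_imp_wc_fair:
  assumes just: "just \<sigma> \<alpha> n"
  shows "wc_fair \<sigma> \<alpha> n"
  unfolding wc_fair_def
proof (intro allI impI, rule ccontr)
  fix k p
  assume k: "enat k \<le> n"
    and enabled: "\<forall>j. k \<le> j \<longrightarrow> enat j \<le> n \<longrightarrow> enabled (\<sigma> j) p"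
    and "\<not> (\<exists>j\<ge>k. enat j < n \<and> p \<in> comp (\<alpha> j))"
  then have idle: "\<And>j. k \<le> j \<Longrightarrow> enat j < n \<Longrightarrow> p \<notin> comp (\<alpha> j)" by blast
  obtain a N' where a: "step (\<sigma> k) a N'" "p \<in> comp a"
    using enabled k unfolding enabled_def by blast
  obtain j where j: "k \<le> j" "enat j < n" "comp (\<alpha> j) \<inter> comp a \<noteq> {}"
    using just k a(1) unfolding just_def by blast
  from step_involving_cases[OF a] show False
  proof (elim disjE exE conjE)
    assume "comp a = {p}"
    then show False using j idle by auto
  next
    fix r l Q assume "comp a = {r, p}" and r: "\<sigma> k r = Some (Sel p l Q)"
    then have "r \<in> comp (\<alpha> j)" using j idle by auto
    then obtain j0 where "k \<le> j0" "enat j0 < n" "r \<in> comp (\<alpha> j0)" "\<sigma> j0 r = \<sigma> k r"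
      using first_move_from_state_at j(1,2) by blast
    then show False using step_from_Sel[OF step_at] r idle by fastforce
  next
    fix q l Q assume "\<sigma> k p = Some (Sel q l Q)"
    then show False using just_selected_sender_moves just k enabled idle by blast
  qed
qed

lemma wc_fair_iff_just: "wc_fair \<sigma> \<alpha> n \<longleftrightarrow> just \<sigma> \<alpha> n"
  using wc_fair_imp_just just_imp_wc_fair by blast

end

theorem mainTheorem5:
  fixes N :: "('l, 'a, 'x) net"
    and \<sigma> :: "nat \<Rightarrow> ('l, 'a, 'x) net" and \<alpha> :: "nat \<Rightarrow> ('l, 'a) act" and n :: enat
  assumes "net_state N"
    and "is_path N \<sigma> \<alpha> n"
  shows "wc_fair \<sigma> \<alpha> n \<longleftrightarrow> just \<sigma> \<alpha> n"
proof -
  interpret transition_sequence \<sigma> \<alpha> n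
    using assms(2) unfolding is_path_def by unfold_locales blast
  show ?thesis by (rule wc_fair_iff_just)
qed

end
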